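(* Let $(\xi_i)_{i\ge1}$ be the points of a Poisson process of rate $1$ on $(0,\infty)$. The set of all probability measures on $[0,\infty)$ solving $$X\stackrel d=\sup_{i\ge1}e^{-\xi_i}X_i,$$ where $X_1,X_2,\dots$ are i.i.d. copies of $X$ independent of $(\xi_i)$, is exactly $\{\delta_0\}\cup\{\mathrm{law}(X_a):a>0\}$, where $P(X_a\le x)=\frac{x}{a+x}$ for $x\ge0$.
   Context: $\delta_0$ is the point mass at $0$ (the case $a=0$). *)

theory Defs
  imports "HOL-Probability.Probability"
begin

text \<open>Rate-1 Poisson process on (0,inf): its points, listed increasingly, are the partial
  sums xi_i = E_0 + ... + E_i of i.i.d. Exp(1) variables E_j.\<close>

definition base_space :: "real measure \<Rightarrow> (nat \<Rightarrow> real \<times> real) measure" where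
  "base_space \<mu> = (\<Pi>\<^sub>M i\<in>(UNIV::nat set). density lborel (exponential_density 1) \<Otimes>\<^sub>M \<mu>)"

definition pp_point :: "(nat \<Rightarrow> real \<times> real) \<Rightarrow> nat \<Rightarrow> real" where
  "pp_point \<omega> i = (\<Sum>j\<le>i. fst (\<omega> j))"

definition pp_copy :: "(nat \<Rightarrow> real \<times> real) \<Rightarrow> nat \<Rightarrow> real" where
  "pp_copy \<omega> i = snd (\<omega> i)"

text \<open>The supremum is taken in [0,inf] (ennreal), so that an a.s.-infinite value is allowed
  and simply fails to be a solution.\<close>
definition max_smoothing :: "real measure \<Rightarrow> ennreal measure" where
  "max_smoothing \<mu> = distr (base_space \<mu>) borel
     (\<lambda>\<omega>. SUP i. ennreal (exp (- pp_point \<omega> i)) * ennreal (pp_copy \<omega> i))"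

definition is_fixed_point :: "real measure \<Rightarrow> bool" where
  "is_fixed_point \<mu> \<longleftrightarrow> max_smoothing \<mu> = distr \<mu> borel ennreal"

end

theory Submission
  imports Defs
begin

text \<open>
  Let \<open>F\<close> be the distribution function of \<open>\<mu>\<close> and \<open>G\<close> that of
  \<open>Y = sup\<^sub>i e\<^bsup>-\<xi>\<^sub>i\<^esup> X\<^sub>i\<close>. Conditioning on the first point and its mark, the remaining
  points form a fresh copy of the process, so \<open>G x = E[F(x e\<^sup>T) G(x e\<^sup>T)]\<close> with
  \<open>T \<sim> Exp(1)\<close>. A fixed point therefore solves \<open>F x = E[F(x e\<^sup>T)\<^sup>2]\<close> for \<open>x \<ge> 0\<close>.
  Splitting this integral at \<open>ln (y/x)\<close> squeezes \<open>F x - (x/y) F y\<close> between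
  \<open>(1 - x/y) F(x)\<^sup>2\<close> and \<open>(1 - x/y) F(y)\<^sup>2\<close>, which forces \<open>x / F x - x\<close> to be a
  constant \<open>a \<ge> 0\<close>, i.e. \<open>F x = x / (x + a)\<close>; the case \<open>a = 0\<close> is \<open>\<delta>\<^sub>0\<close>.

  Conversely, let \<open>F\<close> solve \<open>F x = E[F(x e\<^sup>T)\<^sup>2]\<close>. The recursion for the maxima of the
  first \<open>n\<close> terms starts at distribution function \<open>1 \<ge> F\<close> and preserves \<open>\<ge> F\<close>, so \<open>G \<ge> F\<close>.
  If moreover \<open>1 \<le> F x + C/x\<close>, then starting from \<open>G \<le> 1\<close> each application of the
  recursion halves the error in \<open>G x \<le> F x + \<epsilon>/x\<close>, because \<open>E[e\<^sup>-\<^sup>T] = 1/2\<close>; hence \<open>G = F\<close>.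
\<close>

lemma ennreal_mult_le_ennreal_iff:
  fixes c x :: real and m :: ennreal
  assumes "0 < c" "0 \<le> x"
  shows "ennreal c * m \<le> ennreal x \<longleftrightarrow> m \<le> ennreal (x / c)"
proof (cases m)
  case (real r)
  then show ?thesis using assms
    by (simp add: ennreal_mult''[symmetric] le_divide_eq mult.commute)
next
  case top
  then show ?thesis using assms by (simp add: ennreal_mult_top top_unique)
qed

lemma ennreal_mult_max: "(c::ennreal) * max a b = max (c * a) (c * b)"
  by (rule max_of_mono[symmetric]) (simp add: mono_def mult_left_mono)

lemma SUP_nat_eq_max_Suc:
  fixes g :: "nat \<Rightarrow> 'a::complete_linorder"
  shows "(SUP i. g i) = max (g 0) (SUP i. g (Suc i))"
  by (subst UNIV_nat_eq) (simp add: image_image sup_max)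

lemma sets_borel_eq_sigma_atMost:
  "sets (borel :: 'a::{linorder_topology, second_countable_topology} measure) =
     sigma_sets UNIV (range atMost)"
proof -
  have "sets (borel :: 'a measure) = sigma_sets UNIV (range greaterThan)"
    by (subst borel_Ioi) simp
  also have "\<dots> = sigma_sets UNIV (range atMost)"
  proof (rule sigma_sets_eqI)
    fix A :: "'a set" assume "A \<in> range greaterThan"
    then obtain t where "A = UNIV - {..t}" by (auto simp: Compl_eq_Diff_UNIV[symmetric])
    then show "A \<in> sigma_sets UNIV (range atMost)"
      by (auto intro: sigma_sets.Compl sigma_sets.Basic)
  next
    fix A :: "'a set" assume "A \<in> range atMost"
    then obtain t where "A = UNIV - {t<..}" by (auto simp: Compl_eq_Diff_UNIV[symmetric])
    then show "A \<in> sigma_sets UNIV (range greaterThan)"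
      by (auto intro: sigma_sets.Compl sigma_sets.Basic)
  qed
  finally show ?thesis .
qed

lemma ennreal_distribution_eqI:
  fixes M N :: "ennreal measure"
  assumes "prob_space M" "prob_space N"
    and sets: "sets M = sets borel" "sets N = sets borel"
    and eq: "\<And>x. 0 \<le> x \<Longrightarrow> emeasure M {..ennreal x} = emeasure N {..ennreal x}"
  shows "M = N"
proof (rule measure_eqI_generator_eq[where E="range atMost" and \<Omega>=UNIV and A="\<lambda>_. UNIV"])
  have UNIV_eq: "UNIV = {..top :: ennreal}" by auto
  show "Int_stable (range (atMost :: ennreal \<Rightarrow> _))"
    by (auto simp: Int_stable_def intro!: image_eqI[where x="min _ _"])
  show "sets M = sigma_sets UNIV (range atMost)" "sets N = sigma_sets UNIV (range atMost)"
    by (simp_all add: sets sets_borel_eq_sigma_atMost)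
  show "range (\<lambda>_. UNIV) \<subseteq> range (atMost :: ennreal \<Rightarrow> _)"
    using UNIV_eq by auto
  show "emeasure M UNIV \<noteq> \<infinity>" for i :: nat
    using prob_space.emeasure_space_1[OF assms(1)] sets_eq_imp_space_eq[OF sets(1)] by simp
  fix X assume "X \<in> range (atMost :: ennreal \<Rightarrow> _)"
  then obtain t where X: "X = {..t}" by auto
  show "emeasure M X = emeasure N X"
  proof (cases t rule: ennreal_cases)
    case (real r)
    then show ?thesis using X eq by simp
  next
    case top
    then show ?thesis
      using X UNIV_eq assms(1,2)[THEN prob_space.emeasure_space_1]
        sets[THEN sets_eq_imp_space_eq] by simp
  qed
qed auto

section \<open>The standard exponential distribution\<close>

abbreviation std_exponential :: "real measure" where
  "std_exponential \<equiv> density lborel (exponential_density 1)"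

lemma prob_space_std_exponential: "prob_space std_exponential"
  by (rule prob_space_exponential_density) simp

lemma nn_integral_std_exponential:
  fixes f :: "real \<Rightarrow> ennreal"
  assumes [measurable]: "f \<in> borel_measurable borel"
  shows "(\<integral>\<^sup>+t. f t \<partial>std_exponential) =
    (\<integral>\<^sup>+t. ennreal (exp (-t)) * f t * indicator {0..} t \<partial>lborel)"
  by (subst nn_integral_density)
    (auto intro!: nn_integral_cong simp: exponential_density_def indicator_def)

lemma nn_integral_std_exponential_shift:
  fixes h :: "real \<Rightarrow> ennreal"
  assumes [measurable]: "h \<in> borel_measurable borel" and "0 \<le> c"
  shows "(\<integral>\<^sup>+t. h t \<partial>std_exponential) =
    (\<integral>\<^sup>+t. ennreal (exp (-t)) * h t * indicator {0..<c} t \<partial>lborel) +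
    ennreal (exp (-c)) * (\<integral>\<^sup>+t. h (c + t) \<partial>std_exponential)"
proof -
  let ?g = "\<lambda>I t. ennreal (exp (-t)) * h t * indicator I t"
  have "(\<integral>\<^sup>+t. h t \<partial>std_exponential) = (\<integral>\<^sup>+t. ?g {0..<c} t + ?g {c..} t \<partial>lborel)"
    using \<open>0 \<le> c\<close> by (subst nn_integral_std_exponential)
      (auto intro!: nn_integral_cong simp: indicator_def)
  also have "\<dots> = (\<integral>\<^sup>+t. ?g {0..<c} t \<partial>lborel) + (\<integral>\<^sup>+t. ?g {c..} t \<partial>lborel)"
    by (rule nn_integral_add) auto
  also have "(\<integral>\<^sup>+t. ?g {c..} t \<partial>lborel) = (\<integral>\<^sup>+t. ?g {c..} (c + 1 * t) \<partial>lborel)"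
    using nn_integral_real_affine[of "?g {c..}" 1 c] by simp
  also have "\<dots> =
      (\<integral>\<^sup>+t. ennreal (exp (-c)) * (ennreal (exp (-t)) * h (c + t) * indicator {0..} t) \<partial>lborel)"
  proof (intro nn_integral_cong)
    fix t :: real
    have "ennreal (exp (-(c + t))) = ennreal (exp (-c)) * ennreal (exp (-t))"
      by (simp add: exp_add[symmetric] ennreal_mult[symmetric])
    then show "?g {c..} (c + 1 * t) =
        ennreal (exp (-c)) * (ennreal (exp (-t)) * h (c + t) * indicator {0..} t)"
      by (simp add: indicator_def mult_ac)
  qed
  also have "\<dots> = ennreal (exp (-c)) * (\<integral>\<^sup>+t. h (c + t) \<partial>std_exponential)"
    by (subst nn_integral_cmult) (auto simp: nn_integral_std_exponential)
  finally show ?thesis .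
qed

lemma nn_integral_exp_Ico:
  assumes "0 \<le> c"
  shows "(\<integral>\<^sup>+t. ennreal (exp (-t)) * indicator {0..<c} t \<partial>lborel) = ennreal (1 - exp (-c))"
proof -
  let ?L = "\<integral>\<^sup>+t. ennreal (exp (-t)) * indicator {0..<c} t \<partial>lborel"
  have "1 = ?L + ennreal (exp (-c))"
    using nn_integral_std_exponential_shift[of "\<lambda>_. 1" c] assms
      prob_space.emeasure_space_1[OF prob_space_std_exponential] by simp
  then have "?L = ennreal 1 - ennreal (exp (-c))"
    by (metis ennreal_1 ennreal_add_diff_cancel_right ennreal_neq_top)
  then show ?thesis
    by (simp add: ennreal_minus del: ennreal_1)
qed

lemma nn_integral_std_exponential_exp:
  "(\<integral>\<^sup>+t. ennreal (exp (-t)) \<partial>std_exponential) = ennreal (1/2)"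
proof -
  have "(\<integral>\<^sup>+t. ennreal (exp (-t)) \<partial>std_exponential) =
      (\<integral>\<^sup>+t. ennreal (exp (-2*t)) * indicator {0..} t \<partial>lborel)"
    by (subst nn_integral_std_exponential)
      (auto intro!: nn_integral_cong simp: ennreal_mult''[symmetric] exp_add[symmetric])
  also have "\<dots> = ennreal (0 - (- (1/2) / exp (2 * 0)))"
  proof (rule nn_integral_FTC_atLeast)
    show "((\<lambda>t. - (1/2) / exp (2 * t)) has_real_derivative exp (-2*t)) (at t)" for t :: real
      by (auto intro!: derivative_eq_intros simp: exp_minus field_simps exp_add[symmetric])
    have "filterlim (\<lambda>t::real. 2 * t) at_top at_top"
      by (rule filterlim_tendsto_pos_mult_at_top[OF tendsto_const _ filterlim_ident]) simp
    then have "filterlim (\<lambda>t::real. exp (2 * t)) at_top at_top"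
      by (rule filterlim_compose[OF exp_at_top])
    then show "((\<lambda>t::real. - (1/2) / exp (2 * t)) \<longlongrightarrow> (0::real)) at_top"
      by (intro tendsto_divide_0[OF tendsto_const] filterlim_at_top_imp_at_infinity)
  qed auto
  finally show ?thesis by simp
qed

section \<open>Monotone functions satisfying the difference inequalities\<close>

definition hyperbolic_scale :: "(real \<Rightarrow> real) \<Rightarrow> real \<Rightarrow> real" where
  "hyperbolic_scale F x = x / F x - x"

lemma hyperbolic_scale_increment_le:
  fixes p q x y :: real
  assumes x: "0 < x" "x \<le> y" and p: "0 < p" "p \<le> q"
    and lower: "(1 - x/y) * p\<^sup>2 \<le> p - (x/y) * q"
    and upper: "p - (x/y) * q \<le> (1 - x/y) * q\<^sup>2"
  shows "\<bar>(y / q - y) - (x / p - x)\<bar> \<le> (y - x) * (q - p) / p"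
proof -
  define r where "r = x / y"
  define D where "D = p - r * q - (1 - r) * p * q"
  have y: "0 < y" and q: "0 < q" using x p by simp_all
  have r: "0 < r" "r \<le> 1" "x = r * y" using x y by (auto simp: r_def)
  have k: "0 \<le> y / (p * q)" using y p q by simp
  have eq: "(y / q - y) - (x / p - x) = y / (p * q) * D"
    using p q y unfolding D_def r(3) by (simp add: field_simps)
  have "y / (p * q) * D \<le> y / (p * q) * ((1 - r) * q * (q - p))"
    using upper k unfolding D_def r_def[symmetric]
    by (intro mult_left_mono) (auto simp: power2_eq_square algebra_simps)
  also have "\<dots> = (y - x) * (q - p) / p" using p q y r by (simp add: field_simps)
  finally have A: "y / (p * q) * D \<le> (y - x) * (q - p) / p" .
  have "- ((y - x) * (q - p) / q) = y / (p * q) * ((1 - r) * p * (p - q))"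
    using p q y r by (simp add: field_simps)
  also have "\<dots> \<le> y / (p * q) * D"
    using lower k unfolding D_def r_def[symmetric]
    by (intro mult_left_mono) (auto simp: power2_eq_square algebra_simps)
  finally have "- ((y - x) * (q - p) / q) \<le> y / (p * q) * D" .
  moreover have "(y - x) * (q - p) / q \<le> (y - x) * (q - p) / p"
    using p q x by (intro divide_left_mono mult_nonneg_nonneg) auto
  ultimately show ?thesis using A unfolding eq by (simp add: abs_le_iff)
qed

context
  fixes F :: "real \<Rightarrow> real"
  assumes mono: "\<And>x y. x \<le> y \<Longrightarrow> F x \<le> F y" and le_one: "\<And>x. F x \<le> 1"
    and unbounded: "\<And>x. \<exists>y\<ge>x. 0 < F y"
    and lower: "\<And>x y. 0 < x \<Longrightarrow> x \<le> y \<Longrightarrow> (1 - x/y) * (F x)\<^sup>2 \<le> F x - (x/y) * F y"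
    and upper: "\<And>x y. 0 < x \<Longrightarrow> x \<le> y \<Longrightarrow> F x - (x/y) * F y \<le> (1 - x/y) * (F y)\<^sup>2"
begin

lemma pos_of_difference_ineqs:
  assumes "0 < x" shows "0 < F x"
proof -
  obtain y where y: "x \<le> y" "0 < F y" using unbounded by blast
  have "0 \<le> (1 - x/y) * (F x)\<^sup>2" using assms y by simp
  moreover have "0 < (x/y) * F y" using assms y by simp
  ultimately show ?thesis using lower[OF assms y(1)] by linarith
qed

lemma hyperbolic_scale_diff_le:
  assumes xy: "0 < x" "x \<le> y" and n: "0 < n"
  shows "\<bar>hyperbolic_scale F y - hyperbolic_scale F x\<bar> \<le> (y - x) / (real n * F x)"
proof -
  let ?w = "hyperbolic_scale F"
  define z where "z k = x + real k * (y - x) / real n" for k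
  have z0: "z 0 = x" and zn: "z n = y" using n by (auto simp: z_def)
  have zx: "x \<le> z k" for k using xy by (simp add: z_def)
  have zstep: "z (Suc k) - z k = (y - x) / real n" for k
    by (simp add: z_def add_divide_distrib[symmetric] algebra_simps)
  moreover have "0 \<le> (y - x) / real n" using xy by simp
  ultimately have zle: "z k \<le> z (Suc k)" for k by (metis diff_ge_0_iff_ge)
  have Fx: "0 < F x" using pos_of_difference_ineqs xy by simp
  have "\<bar>?w y - ?w x\<bar> = \<bar>\<Sum>k<n. ?w (z (Suc k)) - ?w (z k)\<bar>"
    by (subst sum_lessThan_telescope) (simp add: z0 zn)
  also have "\<dots> \<le> (\<Sum>k<n. \<bar>?w (z (Suc k)) - ?w (z k)\<bar>)"
    by (rule sum_abs)
  also have "\<dots> \<le> (\<Sum>k<n. (y - x) / real n / F x * (F (z (Suc k)) - F (z k)))"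
  proof (rule sum_mono)
    fix k
    have zk: "0 < z k" using xy zx[of k] by simp
    have "\<bar>?w (z (Suc k)) - ?w (z k)\<bar> \<le>
        (z (Suc k) - z k) * (F (z (Suc k)) - F (z k)) / F (z k)"
      unfolding hyperbolic_scale_def
      using hyperbolic_scale_increment_le[OF zk zle pos_of_difference_ineqs[OF zk] mono[OF zle]
          lower[OF zk zle] upper[OF zk zle]] .
    also have "\<dots> \<le> (z (Suc k) - z k) * (F (z (Suc k)) - F (z k)) / F x"
      using zle[of k] mono[OF zle[of k]] mono[OF zx[of k]] Fx
      by (intro divide_left_mono mult_nonneg_nonneg mult_pos_pos) auto
    finally show "\<bar>?w (z (Suc k)) - ?w (z k)\<bar> \<le>
        (y - x) / real n / F x * (F (z (Suc k)) - F (z k))"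
      by (simp add: zstep)
  qed
  also have "\<dots> = (y - x) / real n / F x * (\<Sum>k<n. F (z (Suc k)) - F (z k))"
    by (simp only: sum_distrib_left)
  also have "\<dots> = (y - x) / real n / F x * (F y - F x)"
    using sum_lessThan_telescope[of "\<lambda>k. F (z k)" n] by (simp add: z0 zn)
  also have "\<dots> \<le> (y - x) / real n / F x"
    using le_one[of y] mono[OF xy(2)] Fx xy by (intro mult_left_le) auto
  finally show ?thesis by simp
qed

lemma hyperbolic_scale_eq:
  assumes xy: "0 < x" "x \<le> y"
  shows "hyperbolic_scale F y = hyperbolic_scale F x"
proof (rule ccontr)
  define d where "d = \<bar>hyperbolic_scale F y - hyperbolic_scale F x\<bar>"
  assume "hyperbolic_scale F y \<noteq> hyperbolic_scale F x"
  then have dF: "0 < d * F x" using pos_of_difference_ineqs xy by (simp add: d_def)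
  obtain n :: nat where n: "(y - x) / (d * F x) < real n" using reals_Archimedean2 by blast
  moreover have "0 \<le> (y - x) / (d * F x)" using xy dF by simp
  ultimately have "0 < n" by linarith
  then have "(y - x) / (real n * F x) < d"
    using n dF pos_of_difference_ineqs[OF xy(1)]
    by (simp add: pos_divide_less_eq divide_less_eq mult_ac)
  with hyperbolic_scale_diff_le[OF xy \<open>0 < n\<close>] show False by (simp add: d_def)
qed

lemma hyperbolic_of_difference_ineqs: "\<exists>a\<ge>0. \<forall>x>0. F x = x / (x + a)"
proof (intro exI conjI allI impI)
  define a where "a = hyperbolic_scale F 1"
  show "0 \<le> a"
    using pos_of_difference_ineqs[of 1] le_one[of 1]
    by (simp add: a_def hyperbolic_scale_def le_divide_eq_1)
  fix x :: real assume x: "0 < x"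
  have "hyperbolic_scale F x = a"
    using hyperbolic_scale_eq[of x 1] hyperbolic_scale_eq[of 1 x] x unfolding a_def
    by (metis linear zero_less_one)
  then have "x / F x = x + a" by (simp add: hyperbolic_scale_def)
  then show "F x = x / (x + a)"
    using pos_of_difference_ineqs[OF x] x \<open>0 \<le> a\<close>
    by (simp add: divide_eq_eq eq_divide_eq mult.commute)
qed

end

section \<open>The smoothing equation\<close>

text \<open>The fixed-point equation in terms of the distribution function.\<close>

definition smoothing_equation :: "(real \<Rightarrow> real) \<Rightarrow> bool" where
  "smoothing_equation F \<longleftrightarrow>
     (\<forall>x\<ge>0. (\<integral>\<^sup>+t. ennreal (F (x * exp t) ^ 2) \<partial>std_exponential) = ennreal (F x))"

lemma smoothing_equation_cong:
  assumes "\<And>x. 0 \<le> x \<Longrightarrow> F x = G x"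
  shows "smoothing_equation F \<longleftrightarrow> smoothing_equation G"
  by (simp add: smoothing_equation_def assms)

lemma smoothing_equation_one: "smoothing_equation (\<lambda>_. 1)"
  using prob_space.emeasure_space_1[OF prob_space_std_exponential]
  by (simp add: smoothing_equation_def)

lemma smoothing_equation_hyperbolic:
  fixes a :: real
  assumes a: "0 < a"
  shows "smoothing_equation (\<lambda>x. x / (a + x))"
  unfolding smoothing_equation_def
proof (intro allI impI)
  fix x :: real assume x: "0 \<le> x"
  have pos: "0 < a + x * exp t" for t using a x by (simp add: add_pos_nonneg)
  have "(\<integral>\<^sup>+t. ennreal ((x * exp t / (a + x * exp t)) ^ 2) \<partial>std_exponential) =
        (\<integral>\<^sup>+t. ennreal (x * x * exp t / (a + x * exp t) ^ 2) * indicator {0..} t \<partial>lborel)"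
  proof (subst nn_integral_std_exponential, measurable, intro nn_integral_cong)
    fix t :: real
    have "exp (-t) * (x * exp t / (a + x * exp t)) ^ 2 = x * x * exp t / (a + x * exp t) ^ 2"
      using pos[of t] by (simp add: field_simps power2_eq_square exp_minus)
    then show "ennreal (exp (-t)) * ennreal ((x * exp t / (a + x * exp t)) ^ 2) *
        indicator {0..} t = ennreal (x * x * exp t / (a + x * exp t) ^ 2) * indicator {0..} t"
      by (simp add: ennreal_mult[symmetric])
  qed
  also have "\<dots> = ennreal (0 - (- x / (a + x * exp 0)))"
  proof (rule nn_integral_FTC_atLeast)
    show "((\<lambda>t. - x / (a + x * exp t)) has_real_derivative
        x * x * exp t / (a + x * exp t) ^ 2) (at t)" for t
      using pos[of t] by (auto intro!: derivative_eq_intros simp: power2_eq_square field_simps)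
    show "((\<lambda>t. - x / (a + x * exp t)) \<longlongrightarrow> 0) at_top"
    proof (cases "x = 0")
      case False
      then have "filterlim (\<lambda>t::real. a + x * exp t) at_top at_top"
        using x by (intro filterlim_tendsto_add_at_top[OF tendsto_const]
            filterlim_tendsto_pos_mult_at_top[OF tendsto_const _ exp_at_top]) simp
      then show ?thesis
        by (intro tendsto_divide_0[OF tendsto_const] filterlim_at_top_imp_at_infinity)
    qed simp
  qed (use x in auto)
  finally show "(\<integral>\<^sup>+t. ennreal ((x * exp t / (a + x * exp t)) ^ 2) \<partial>std_exponential) =
      ennreal (x / (a + x))"
    by simp
qed

text \<open>Split the integral at \<open>c = ln (y/x)\<close>: by memorylessness the part beyond \<open>c\<close> is
  \<open>(x/y) F y\<close>, and on \<open>[0, c)\<close> the integrand lies between \<open>F(x)\<^sup>2\<close> and \<open>F(y)\<^sup>2\<close>.\<close>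

lemma difference_ineqs_of_smoothing_equation:
  fixes F :: "real \<Rightarrow> real"
  assumes mono: "mono F" and nonneg: "\<And>x. 0 \<le> F x" and eq: "smoothing_equation F"
    and xy: "0 < x" "x \<le> y"
  shows "(1 - x/y) * (F x)\<^sup>2 \<le> F x - (x/y) * F y \<and> F x - (x/y) * F y \<le> (1 - x/y) * (F y)\<^sup>2"
proof -
  define r where "r = x / y"
  define c where "c = ln (y / x)"
  define J where
    "J = (\<integral>\<^sup>+t. ennreal (exp (-t)) * ennreal (F (x * exp t) ^ 2) * indicator {0..<c} t \<partial>lborel)"
  have [measurable]: "F \<in> borel_measurable borel" using mono by (rule borel_measurable_mono)
  have r: "0 < r" "r \<le> 1" using xy by (auto simp: r_def)
  have c: "0 \<le> c" "exp (-c) = r" "x * exp c = y" using xy by (auto simp: c_def r_def exp_minus)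
  have "ennreal (F x) = (\<integral>\<^sup>+t. ennreal (F (x * exp t) ^ 2) \<partial>std_exponential)"
    using eq xy by (simp add: smoothing_equation_def)
  also have "\<dots> = J + ennreal r * (\<integral>\<^sup>+t. ennreal (F (x * exp (c + t)) ^ 2) \<partial>std_exponential)"
    unfolding J_def c(2)[symmetric] by (rule nn_integral_std_exponential_shift) (auto simp: c)
  also have "(\<integral>\<^sup>+t. ennreal (F (x * exp (c + t)) ^ 2) \<partial>std_exponential) = ennreal (F y)"
    using eq xy c(3) by (simp add: smoothing_equation_def exp_add mult.assoc[symmetric])
  finally have split: "ennreal (F x) = J + ennreal (r * F y)"
    using r nonneg by (simp add: ennreal_mult)
  have J_bound: "(\<integral>\<^sup>+t. ennreal (exp (-t)) * ennreal k * indicator {0..<c} t \<partial>lborel) =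
      ennreal ((1 - r) * k)" if "0 \<le> k" for k
    using that r c nn_integral_exp_Ico[OF c(1)]
    by (subst mult.commute, subst mult.assoc, subst nn_integral_cmult)
      (auto simp: ennreal_mult mult.commute)
  have between: "F x \<le> F (x * exp t) \<and> F (x * exp t) \<le> F y" if "t \<in> {0..<c}" for t
  proof -
    have "x \<le> x * exp t" "x * exp t \<le> x * exp c" using that xy by auto
    then show ?thesis using c(3) by (auto intro!: monoD[OF mono])
  qed
  have "ennreal ((1 - r) * (F x)\<^sup>2) \<le> J"
    unfolding J_def J_bound[OF zero_le_power2, symmetric] using between nonneg
    by (intro nn_integral_mono)
      (auto intro!: mult_left_mono ennreal_leI power_mono simp: indicator_def)
  then have "ennreal ((1 - r) * (F x)\<^sup>2 + r * F y) \<le> ennreal (F x)"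
    using r nonneg[of y] by (simp add: split ennreal_plus add_right_mono)
  then have lower: "(1 - r) * (F x)\<^sup>2 \<le> F x - r * F y"
    using nonneg[of x] by simp
  have "J \<le> ennreal ((1 - r) * (F y)\<^sup>2)"
    unfolding J_def J_bound[OF zero_le_power2, symmetric] using between nonneg
    by (intro nn_integral_mono)
      (auto intro!: mult_left_mono ennreal_leI power_mono simp: indicator_def)
  then have "ennreal (F x) \<le> ennreal ((1 - r) * (F y)\<^sup>2 + r * F y)"
    using r nonneg[of y] by (simp add: split ennreal_plus add_right_mono)
  then have upper: "F x - r * F y \<le> (1 - r) * (F y)\<^sup>2"
    using r nonneg[of y] by (subst (asm) ennreal_le_iff) auto
  show ?thesis using lower upper by (simp add: r_def)
qed

section \<open>Maxima of discounted copies\<close>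

definition discounted_copy :: "(nat \<Rightarrow> real \<times> real) \<Rightarrow> nat \<Rightarrow> ennreal" where
  "discounted_copy \<omega> i = ennreal (exp (- pp_point \<omega> i)) * ennreal (pp_copy \<omega> i)"

definition smoothed_max :: "(nat \<Rightarrow> real \<times> real) \<Rightarrow> ennreal" where
  "smoothed_max \<omega> = (SUP i. discounted_copy \<omega> i)"

definition partial_smoothed_max :: "nat \<Rightarrow> (nat \<Rightarrow> real \<times> real) \<Rightarrow> ennreal" where
  "partial_smoothed_max n \<omega> = (SUP i\<in>{..<n}. discounted_copy \<omega> i)"

lemma discounted_copy_case_nat_0:
  "discounted_copy (case_nat s \<omega>) 0 = ennreal (exp (- fst s)) * ennreal (snd s)"
  by (simp add: discounted_copy_def pp_point_def pp_copy_def)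

lemma discounted_copy_case_nat_Suc:
  "discounted_copy (case_nat s \<omega>) (Suc i) = ennreal (exp (- fst s)) * discounted_copy \<omega> i"
proof -
  have "pp_point (case_nat s \<omega>) (Suc i) = fst s + pp_point \<omega> i"
    unfolding pp_point_def by (subst sum.atMost_Suc_shift) simp
  moreover have "exp (- (fst s + pp_point \<omega> i)) = exp (- fst s) * exp (- pp_point \<omega> i)"
    by (simp add: exp_add[symmetric])
  ultimately show ?thesis
    by (simp add: discounted_copy_def pp_copy_def ennreal_mult mult.assoc)
qed

lemma smoothed_max_case_nat:
  "smoothed_max (case_nat s \<omega>) =
     ennreal (exp (- fst s)) * max (ennreal (snd s)) (smoothed_max \<omega>)"
  unfolding smoothed_max_def
  by (subst SUP_nat_eq_max_Suc) (simp add: discounted_copy_case_nat_0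
      discounted_copy_case_nat_Suc ennreal_mult_max SUP_mult_left_ennreal)

lemma partial_smoothed_max_0: "partial_smoothed_max 0 \<omega> = 0"
  by (simp add: partial_smoothed_max_def bot_ennreal)

lemma partial_smoothed_max_Suc_case_nat:
  "partial_smoothed_max (Suc n) (case_nat s \<omega>) =
     ennreal (exp (- fst s)) * max (ennreal (snd s)) (partial_smoothed_max n \<omega>)"
proof -
  have "partial_smoothed_max (Suc n) (case_nat s \<omega>) =
      max (discounted_copy (case_nat s \<omega>) 0)
        (SUP i\<in>{..<n}. discounted_copy (case_nat s \<omega>) (Suc i))"
    unfolding partial_smoothed_max_def lessThan_Suc_eq_insert_0
    by (simp add: image_image sup_max)
  then show ?thesis
    unfolding partial_smoothed_max_def discounted_copy_case_nat_0 discounted_copy_case_nat_Suc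
    by (cases "n = 0") (simp_all add: ennreal_mult_max SUP_mult_left_ennreal[symmetric])
qed

lemma smoothed_max_eq_SUP_partial: "smoothed_max \<omega> = (SUP n. partial_smoothed_max n \<omega>)"
  unfolding smoothed_max_def partial_smoothed_max_def
  by (simp add: SUP_UNION[symmetric] UN_lessThan_UNIV)

lemma partial_smoothed_max_mono:
  "m \<le> n \<Longrightarrow> partial_smoothed_max m \<omega> \<le> partial_smoothed_max n \<omega>"
  unfolding partial_smoothed_max_def by (rule SUP_subset_mono) auto

locale nonneg_real_distribution = real_distribution \<mu> for \<mu> +
  assumes AE_nonneg: "AE x in \<mu>. 0 \<le> x"
begin

lemma sequence_space_base: "sequence_space (std_exponential \<Otimes>\<^sub>M \<mu>)"
  by (simp add: sequence_space_def product_prob_space_def product_prob_space_axioms_def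
      product_sigma_finite_def prob_space_pair prob_space_std_exponential prob_space_axioms
      prob_space_imp_sigma_finite)

lemma prob_space_base_space: "prob_space (base_space \<mu>)"
  unfolding base_space_def using sequence_space_base
  by (simp add: prob_space_PiM prob_space_pair prob_space_std_exponential prob_space_axioms)

interpretation B: prob_space "base_space \<mu>"
  by (rule prob_space_base_space)

lemma space_base_space: "space (base_space \<mu>) = UNIV"
  by (auto simp: base_space_def space_PiM space_pair_measure PiE_def extensional_def)

lemma measurable_discounted_copy [measurable]:
  "(\<lambda>\<omega>. discounted_copy \<omega> i) \<in> borel_measurable (base_space \<mu>)"
  unfolding discounted_copy_def pp_point_def pp_copy_def base_space_def by measurable

lemma measurable_smoothed_max [measurable]: "smoothed_max \<in> borel_measurable (base_space \<mu>)"
  unfolding smoothed_max_def by measurable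

lemma measurable_partial_smoothed_max [measurable]:
  "partial_smoothed_max n \<in> borel_measurable (base_space \<mu>)"
  unfolding partial_smoothed_max_def by measurable

lemma measurable_cdf [measurable]: "cdf \<mu> \<in> borel_measurable borel"
  by (rule borel_measurable_mono) (simp add: mono_def cdf_nondecreasing)

lemma emeasure_atMost_eq_cdf: "emeasure \<mu> {..x} = ennreal (cdf \<mu> x)"
  by (simp add: emeasure_eq_measure cdf_def)

definition prob_le :: "((nat \<Rightarrow> real \<times> real) \<Rightarrow> ennreal) \<Rightarrow> real \<Rightarrow> ennreal" where
  "prob_le Z x = emeasure (base_space \<mu>) {\<omega> \<in> space (base_space \<mu>). Z \<omega> \<le> ennreal x}"

lemma prob_le_le_1: "prob_le Z x \<le> 1"
  unfolding prob_le_def by (rule B.emeasure_le_1)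

lemma max_smoothing_eq_distr: "max_smoothing \<mu> = distr (base_space \<mu>) borel smoothed_max"
  unfolding max_smoothing_def smoothed_max_def[abs_def] discounted_copy_def by simp

lemma is_fixed_point_iff_prob_le:
  "is_fixed_point \<mu> \<longleftrightarrow> (\<forall>x\<ge>0. prob_le smoothed_max x = ennreal (cdf \<mu> x))"
proof -
  have max_smoothing: "emeasure (max_smoothing \<mu>) {..ennreal x} = prob_le smoothed_max x" for x
    unfolding max_smoothing_eq_distr prob_le_def
    by (subst emeasure_distr) (auto intro!: arg_cong[where f="emeasure _"])
  have law: "emeasure (distr \<mu> borel ennreal) {..ennreal x} = ennreal (cdf \<mu> x)"
    if "0 \<le> x" for x
  proof -
    have "ennreal -` {..ennreal x} \<inter> space \<mu> = {..x}" using that by auto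
    then show ?thesis by (subst emeasure_distr) (auto simp: emeasure_atMost_eq_cdf)
  qed
  show ?thesis
  proof
    assume "is_fixed_point \<mu>"
    then show "\<forall>x\<ge>0. prob_le smoothed_max x = ennreal (cdf \<mu> x)"
      using max_smoothing law by (simp add: is_fixed_point_def)
  next
    assume "\<forall>x\<ge>0. prob_le smoothed_max x = ennreal (cdf \<mu> x)"
    then show "is_fixed_point \<mu>"
      unfolding is_fixed_point_def using max_smoothing law
      by (intro ennreal_distribution_eqI)
        (auto simp: max_smoothing_eq_distr intro: B.prob_space_distr prob_space_distr)
  qed
qed

text \<open>Conditioning on the first coordinate \<open>s = (E\<^sub>0, X\<^sub>0)\<close>: the remaining coordinates are
  again distributed according to \<open>base_space \<mu>\<close> (\<open>PiM_iter\<close>), and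
  \<open>e\<^bsup>-E\<^sub>0\<^esup> max X\<^sub>0 Z \<le> x\<close> iff both \<open>X\<^sub>0\<close> and \<open>Z\<close> are at most \<open>x e\<^bsup>E\<^sub>0\<^esup>\<close>.\<close>

lemma prob_le_first_step:
  assumes [measurable]: "Z \<in> borel_measurable (base_space \<mu>)"
    "W \<in> borel_measurable (base_space \<mu>)"
    and W: "\<And>s \<omega>. W (case_nat s \<omega>) = ennreal (exp (- fst s)) * max (ennreal (snd s)) (Z \<omega>)"
    and x: "0 \<le> x"
  shows "prob_le W x =
    (\<integral>\<^sup>+t. ennreal (cdf \<mu> (x * exp t)) * prob_le Z (x * exp t) \<partial>std_exponential)"
proof -
  let ?B = "base_space \<mu>" and ?M = "std_exponential \<Otimes>\<^sub>M \<mu>"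
  let ?A = "{\<omega> \<in> space ?B. W \<omega> \<le> ennreal x}"
  let ?f = "\<lambda>p. indicator ?A ((\<lambda>(s, \<omega>). case_nat s \<omega>) p) :: ennreal"
  let ?g = "\<lambda>s. indicator {..x * exp (fst s)} (snd s) * prob_le Z (x * exp (fst s))"
  have shift [measurable]: "(\<lambda>(s, \<omega>). case_nat s \<omega>) \<in> ?M \<Otimes>\<^sub>M ?B \<rightarrow>\<^sub>M ?B"
    unfolding base_space_def by measurable
  have [measurable]: "?f \<in> borel_measurable (?M \<Otimes>\<^sub>M ?B)"
    by measurable
  have inner: "(\<integral>\<^sup>+\<omega>. ?f (s, \<omega>) \<partial>?B) = ?g s" for s
  proof -
    have "?f (s, \<omega>) = indicator {..x * exp (fst s)} (snd s) *
        indicator {\<omega> \<in> space ?B. Z \<omega> \<le> ennreal (x * exp (fst s))} \<omega>" for \<omega>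
      using x by (simp add: W space_base_space ennreal_mult_le_ennreal_iff exp_minus field_simps
          indicator_def)
    then show ?thesis
      by (simp add: nn_integral_cmult_indicator prob_le_def)
  qed
  have "prob_le W x = (\<integral>\<^sup>+\<omega>. indicator ?A \<omega> \<partial>?B)"
    unfolding prob_le_def by (rule nn_integral_indicator[symmetric]) measurable
  also have "\<dots> = (\<integral>\<^sup>+\<omega>. indicator ?A \<omega> \<partial>distr (?M \<Otimes>\<^sub>M ?B) ?B (\<lambda>(s, \<omega>). case_nat s \<omega>))"
    using sequence_space.PiM_iter[OF sequence_space_base] by (simp only: base_space_def)
  also have "\<dots> = (\<integral>\<^sup>+p. ?f p \<partial>(?M \<Otimes>\<^sub>M ?B))"
    by (rule nn_integral_distr[OF shift]) measurable
  also have "\<dots> = (\<integral>\<^sup>+s. \<integral>\<^sup>+\<omega>. ?f (s, \<omega>) \<partial>?B \<partial>?M)"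
    by (rule B.nn_integral_fst[symmetric]) measurable
  also have "\<dots> = (\<integral>\<^sup>+s. ?g s \<partial>?M)"
    by (simp only: inner)
  also have "\<dots> = (\<integral>\<^sup>+t. \<integral>\<^sup>+X. ?g (t, X) \<partial>\<mu> \<partial>std_exponential)"
  proof -
    have "(\<lambda>s. \<integral>\<^sup>+\<omega>. ?f (s, \<omega>) \<partial>?B) \<in> borel_measurable ?M"
      by (rule B.borel_measurable_nn_integral_fst) measurable
    then have "?g \<in> borel_measurable ?M"
      by (simp only: inner)
    then show ?thesis by (simp add: nn_integral_fst[symmetric])
  qed
  also have "\<dots> =
      (\<integral>\<^sup>+t. ennreal (cdf \<mu> (x * exp t)) * prob_le Z (x * exp t) \<partial>std_exponential)"
    by (simp add: nn_integral_multc emeasure_atMost_eq_cdf)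
  finally show ?thesis .
qed

lemma prob_le_smoothed_max_eq:
  "0 \<le> x \<Longrightarrow> prob_le smoothed_max x =
     (\<integral>\<^sup>+t. ennreal (cdf \<mu> (x * exp t)) * prob_le smoothed_max (x * exp t) \<partial>std_exponential)"
  by (rule prob_le_first_step[OF measurable_smoothed_max measurable_smoothed_max
        smoothed_max_case_nat])

lemma prob_le_partial_smoothed_max_Suc:
  "0 \<le> x \<Longrightarrow> prob_le (partial_smoothed_max (Suc n)) x =
     (\<integral>\<^sup>+t. ennreal (cdf \<mu> (x * exp t)) * prob_le (partial_smoothed_max n) (x * exp t)
       \<partial>std_exponential)"
  by (rule prob_le_first_step[OF measurable_partial_smoothed_max measurable_partial_smoothed_max
        partial_smoothed_max_Suc_case_nat])

lemma prob_le_partial_smoothed_max_0: "prob_le (partial_smoothed_max 0) x = 1"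
  by (simp add: prob_le_def partial_smoothed_max_0 B.emeasure_space_1)

lemma prob_le_smoothed_max_eq_INF:
  "prob_le smoothed_max x = (INF n. prob_le (partial_smoothed_max n) x)"
proof -
  let ?A = "\<lambda>n. {\<omega> \<in> space (base_space \<mu>). partial_smoothed_max n \<omega> \<le> ennreal x}"
  have "{\<omega> \<in> space (base_space \<mu>). smoothed_max \<omega> \<le> ennreal x} = (\<Inter>n. ?A n)"
    by (auto simp: smoothed_max_eq_SUP_partial SUP_le_iff)
  moreover have "emeasure (base_space \<mu>) (\<Inter>n. ?A n) = (INF n. emeasure (base_space \<mu>) (?A n))"
    by (rule INF_emeasure_decseq[symmetric])
      (auto simp: decseq_def intro: order_trans partial_smoothed_max_mono)
  ultimately show ?thesis by (simp add: prob_le_def)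
qed

lemma cdf_le_prob_le_smoothed_max:
  assumes eq: "smoothing_equation (cdf \<mu>)" and x: "0 \<le> x"
  shows "ennreal (cdf \<mu> x) \<le> prob_le smoothed_max x"
proof -
  have "ennreal (cdf \<mu> x) \<le> prob_le (partial_smoothed_max n) x" if "0 \<le> x" for n x
    using that
  proof (induction n arbitrary: x)
    case 0
    then show ?case by (simp add: prob_le_partial_smoothed_max_0 cdf_bounded_prob)
  next
    case (Suc n)
    have "ennreal (cdf \<mu> x) =
        (\<integral>\<^sup>+t. ennreal (cdf \<mu> (x * exp t)) * ennreal (cdf \<mu> (x * exp t)) \<partial>std_exponential)"
      using eq Suc.prems
      by (simp add: smoothing_equation_def power2_eq_square ennreal_mult cdf_nonneg)
    also have "\<dots> \<le> (\<integral>\<^sup>+t. ennreal (cdf \<mu> (x * exp t)) *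
        prob_le (partial_smoothed_max n) (x * exp t) \<partial>std_exponential)"
      using Suc by (intro nn_integral_mono mult_left_mono) auto
    also have "\<dots> = prob_le (partial_smoothed_max (Suc n)) x"
      using prob_le_partial_smoothed_max_Suc[OF Suc.prems] by simp
    finally show ?case .
  qed
  then show ?thesis
    using x by (auto simp: prob_le_smoothed_max_eq_INF intro!: INF_greatest)
qed

text \<open>At \<open>x = 0\<close> the recursion degenerates to \<open>G 0 = F 0 * G 0\<close>.\<close>

lemma prob_le_smoothed_max_0_le: "prob_le smoothed_max 0 \<le> ennreal (cdf \<mu> 0)"
proof (cases "cdf \<mu> 0 = 1")
  case True
  then show ?thesis using prob_le_le_1 by simp
next
  case False
  have "prob_le smoothed_max 0 \<noteq> top"
    by (rule neq_top_trans[OF ennreal_one_neq_top prob_le_le_1])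
  then obtain g where g: "prob_le smoothed_max 0 = ennreal g" "0 \<le> g"
    by (cases "prob_le smoothed_max 0") auto
  have "ennreal g = ennreal (cdf \<mu> 0) * ennreal g"
    using prob_le_smoothed_max_eq[of 0] prob_space.emeasure_space_1[OF prob_space_std_exponential]
    by (simp add: g(1) mult.commute)
  then have "g = cdf \<mu> 0 * g"
    using g(2) cdf_nonneg by (simp add: ennreal_mult[symmetric])
  then have "g = 0" using False by (metis mult_cancel_right2)
  then show ?thesis using g(1) by simp
qed

context
  fixes C :: real
  assumes eq: "smoothing_equation (cdf \<mu>)" and C: "0 \<le> C"
    and tail: "\<And>x. 0 < x \<Longrightarrow> 1 \<le> cdf \<mu> x + C / x"
begin

lemma prob_le_smoothed_max_le_cdf_add:
  "0 < x \<Longrightarrow> prob_le smoothed_max x \<le> ennreal (cdf \<mu> x + C / x / 2 ^ n)"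
proof (induction n arbitrary: x)
  case 0
  then have "1 \<le> ennreal (cdf \<mu> x + C / x / 2 ^ 0)"
    using tail[of x] by simp
  then show ?case using prob_le_le_1 by (rule order_trans[rotated])
next
  case (Suc n)
  define d where "d = C / x / 2 ^ n"
  have d: "0 \<le> d" using C Suc.prems by (simp add: d_def)
  have "prob_le smoothed_max x = (\<integral>\<^sup>+t. ennreal (cdf \<mu> (x * exp t)) *
      prob_le smoothed_max (x * exp t) \<partial>std_exponential)"
    using Suc.prems by (simp add: prob_le_smoothed_max_eq)
  also have "\<dots> \<le> (\<integral>\<^sup>+t. ennreal (cdf \<mu> (x * exp t) ^ 2) + ennreal d * ennreal (exp (-t))
      \<partial>std_exponential)"
  proof (rule nn_integral_mono)
    fix t
    let ?y = "x * exp t"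
    have "C / ?y / 2 ^ n = d * exp (-t)" by (simp add: d_def exp_minus field_simps)
    then have bound: "cdf \<mu> ?y * (cdf \<mu> ?y + C / ?y / 2 ^ n) \<le> cdf \<mu> ?y ^ 2 + d * exp (-t)"
      using d cdf_bounded_prob[of ?y] cdf_nonneg[of ?y]
      by (simp add: power2_eq_square distrib_left mult_left_le_one_le)
    have "ennreal (cdf \<mu> ?y) * prob_le smoothed_max ?y \<le>
        ennreal (cdf \<mu> ?y) * ennreal (cdf \<mu> ?y + C / ?y / 2 ^ n)"
      using Suc.IH[of ?y] Suc.prems by (intro mult_left_mono) auto
    also have "\<dots> = ennreal (cdf \<mu> ?y * (cdf \<mu> ?y + C / ?y / 2 ^ n))"
      using cdf_nonneg[of ?y] C Suc.prems by (simp add: ennreal_mult)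
    also have "\<dots> \<le> ennreal (cdf \<mu> ?y ^ 2 + d * exp (-t))"
      using bound by (rule ennreal_leI)
    also have "\<dots> = ennreal (cdf \<mu> ?y ^ 2) + ennreal d * ennreal (exp (-t))"
      using d by (simp add: ennreal_plus ennreal_mult)
    finally show "ennreal (cdf \<mu> ?y) * prob_le smoothed_max ?y \<le>
        ennreal (cdf \<mu> ?y ^ 2) + ennreal d * ennreal (exp (-t))" .
  qed
  also have "\<dots> = ennreal (cdf \<mu> x) + ennreal d * ennreal (1/2)"
    using eq Suc.prems by (subst nn_integral_add)
      (auto simp: nn_integral_cmult nn_integral_std_exponential_exp smoothing_equation_def)
  also have "\<dots> = ennreal (cdf \<mu> x) + ennreal (C / x / 2 ^ Suc n)"
    by (subst ennreal_mult''[symmetric]) (simp_all add: d_def mult_ac)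
  also have "\<dots> = ennreal (cdf \<mu> x + C / x / 2 ^ Suc n)"
    using C Suc.prems cdf_nonneg[of x] by (simp add: ennreal_plus)
  finally show ?case .
qed

lemma prob_le_smoothed_max_le_cdf:
  assumes "0 \<le> x" shows "prob_le smoothed_max x \<le> ennreal (cdf \<mu> x)"
proof (cases "x = 0")
  case True
  then show ?thesis using prob_le_smoothed_max_0_le by simp
next
  case False
  then have "0 < x" using assms by simp
  have "(\<lambda>n. ennreal (cdf \<mu> x + C / x / 2 ^ n)) \<longlonglongrightarrow> ennreal (cdf \<mu> x + 0)"
    by (intro tendsto_ennrealI tendsto_add tendsto_const LIMSEQ_divide_realpow_zero) simp
  then show ?thesis
    using prob_le_smoothed_max_le_cdf_add[OF \<open>0 < x\<close>] by (intro LIMSEQ_le_const) auto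
qed

lemma is_fixed_point_of_tail_bound: "is_fixed_point \<mu>"
  unfolding is_fixed_point_iff_prob_le
  using cdf_le_prob_le_smoothed_max[OF eq] prob_le_smoothed_max_le_cdf by (auto intro: antisym)

end

lemma smoothing_equation_of_fixed_point:
  assumes "is_fixed_point \<mu>" shows "smoothing_equation (cdf \<mu>)"
  unfolding smoothing_equation_def
proof (intro allI impI)
  fix x :: real assume x: "0 \<le> x"
  have G: "prob_le smoothed_max y = ennreal (cdf \<mu> y)" if "0 \<le> y" for y
    using assms that by (simp add: is_fixed_point_iff_prob_le)
  have "ennreal (cdf \<mu> x) = prob_le smoothed_max x"
    using G[OF x] ..
  also have "\<dots> = (\<integral>\<^sup>+t. ennreal (cdf \<mu> (x * exp t)) *
      prob_le smoothed_max (x * exp t) \<partial>std_exponential)"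
    using x by (rule prob_le_smoothed_max_eq)
  also have "\<dots> = (\<integral>\<^sup>+t. ennreal (cdf \<mu> (x * exp t) ^ 2) \<partial>std_exponential)"
    using x by (intro nn_integral_cong) (simp add: G power2_eq_square ennreal_mult cdf_nonneg)
  finally show "(\<integral>\<^sup>+t. ennreal (cdf \<mu> (x * exp t) ^ 2) \<partial>std_exponential) = ennreal (cdf \<mu> x)" ..
qed

lemma hyperbolic_cdf_of_fixed_point:
  assumes "is_fixed_point \<mu>" shows "\<exists>a\<ge>0. \<forall>x>0. cdf \<mu> x = x / (x + a)"
proof (rule hyperbolic_of_difference_ineqs)
  have mono: "mono (cdf \<mu>)" by (simp add: mono_def cdf_nondecreasing)
  note ineqs = difference_ineqs_of_smoothing_equation[OF mono cdf_nonneg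
      smoothing_equation_of_fixed_point[OF assms]]
  show "cdf \<mu> x \<le> cdf \<mu> y" if "x \<le> y" for x y using that by (rule cdf_nondecreasing)
  show "cdf \<mu> x \<le> 1" for x by (rule cdf_bounded_prob)
  show "\<exists>y\<ge>x. 0 < cdf \<mu> y" for x
  proof -
    have "\<forall>\<^sub>F y in at_top. 1/2 < cdf \<mu> y"
      using cdf_lim_at_top_prob by (rule order_tendstoD) simp
    then obtain y0 where y0: "\<And>y. y0 \<le> y \<Longrightarrow> 1/2 < cdf \<mu> y"
      by (auto simp: eventually_at_top_linorder)
    have "1/2 < cdf \<mu> (max x y0)" by (rule y0) simp
    then show ?thesis by (intro exI[of _ "max x y0"]) simp
  qed
  show "(1 - x/y) * (cdf \<mu> x)\<^sup>2 \<le> cdf \<mu> x - x/y * cdf \<mu> y" if "0 < x" "x \<le> y" for x y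
    using ineqs[OF that] by simp
  show "cdf \<mu> x - x/y * cdf \<mu> y \<le> (1 - x/y) * (cdf \<mu> y)\<^sup>2" if "0 < x" "x \<le> y" for x y
    using ineqs[OF that] by simp
qed

lemma cdf_0_eq_limit:
  assumes "\<And>x. 0 < x \<Longrightarrow> cdf \<mu> x = f x" and "(f \<longlongrightarrow> L) (at_right 0)"
  shows "cdf \<mu> 0 = L"
proof -
  have "\<forall>\<^sub>F x in at_right 0. cdf \<mu> x = f x"
    using eventually_at_right_less by (rule eventually_mono) (rule assms(1))
  then have "(cdf \<mu> \<longlongrightarrow> L) (at_right 0)"
    using assms(2) by (subst tendsto_cong)
  moreover have "(cdf \<mu> \<longlongrightarrow> cdf \<mu> 0) (at_right 0)"
    using cdf_is_right_cont[of 0] by (simp add: continuous_within)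
  ultimately show ?thesis
    using tendsto_unique[OF trivial_limit_at_right_real] by blast
qed

lemma eq_return_0_of_cdf:
  assumes "\<And>x. 0 \<le> x \<Longrightarrow> cdf \<mu> x = 1"
  shows "\<mu> = return borel 0"
proof (rule cdf_unique)
  show "real_distribution \<mu>" by (rule real_distribution_axioms)
  show "real_distribution (return borel (0::real))"
    by (simp add: real_distribution_def real_distribution_axioms_def prob_space_return)
  show "cdf \<mu> = cdf (return borel 0)"
  proof
    fix x :: real
    show "cdf \<mu> x = cdf (return borel 0) x"
    proof (cases "0 \<le> x")
      case True
      then show ?thesis using assms by (simp add: cdf_def measure_return)
    next
      case False
      have "AE y in \<mu>. \<not> y \<le> x"
        using AE_nonneg by eventually_elim (use False in auto)
      then have "emeasure \<mu> {y \<in> space \<mu>. y \<le> x} = 0"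
        by (rule emeasure_eq_0_AE)
      then have "cdf \<mu> x = 0" by (simp add: cdf_def measure_def atMost_def)
      then show ?thesis using False by (simp add: cdf_def measure_return)
    qed
  qed
qed

lemma cdf_cases_of_fixed_point:
  assumes "is_fixed_point \<mu>"
  shows "\<mu> = return borel 0 \<or> (\<exists>a>0. \<forall>x\<ge>0. cdf \<mu> x = x / (a + x))"
proof -
  obtain a where "0 \<le> a" and a: "\<And>x. 0 < x \<Longrightarrow> cdf \<mu> x = x / (x + a)"
    using hyperbolic_cdf_of_fixed_point[OF assms] by blast
  show ?thesis
  proof (cases "a = 0")
    case True
    then have "cdf \<mu> 0 = 1" using a by (intro cdf_0_eq_limit[of "\<lambda>_. 1"]) auto
    then have "\<mu> = return borel 0" using a True by (intro eq_return_0_of_cdf) (auto simp: le_less)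
    then show ?thesis ..
  next
    case False
    have "((\<lambda>x. x / (x + a)) \<longlongrightarrow> 0 / (0 + a)) (at_right 0)"
      using False by (intro tendsto_intros) auto
    then have "cdf \<mu> 0 = 0" using a by (intro cdf_0_eq_limit) auto
    then have "\<forall>x\<ge>0. cdf \<mu> x = x / (a + x)" using a by (auto simp: le_less add.commute)
    then show ?thesis using False \<open>0 \<le> a\<close> by (intro disjI2 exI[of _ a]) auto
  qed
qed

lemma is_fixed_point_of_cdf_one:
  assumes "\<And>x. 0 \<le> x \<Longrightarrow> cdf \<mu> x = 1"
  shows "is_fixed_point \<mu>"
proof (rule is_fixed_point_of_tail_bound[where C=0])
  show "smoothing_equation (cdf \<mu>)"
    using smoothing_equation_one by (subst smoothing_equation_cong[OF assms])
qed (auto simp: assms)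

lemma is_fixed_point_of_cdf_hyperbolic:
  assumes a: "0 < a" and F: "\<And>x. 0 \<le> x \<Longrightarrow> cdf \<mu> x = x / (a + x)"
  shows "is_fixed_point \<mu>"
proof (rule is_fixed_point_of_tail_bound[where C=a])
  show "smoothing_equation (cdf \<mu>)"
    using smoothing_equation_hyperbolic[OF a] by (subst smoothing_equation_cong[OF F])
  show "1 \<le> cdf \<mu> x + a / x" if x: "0 < x" for x
  proof -
    have "a / (a + x) \<le> a / x" using a x by (intro divide_left_mono) auto
    moreover have "x / (a + x) + a / (a + x) = 1"
      using a x by (simp add: add_divide_distrib[symmetric])
    ultimately show ?thesis using F x by simp
  qed
qed (use a in simp)

end

theorem proposition39:
  fixes \<mu> :: "real measure"
  assumes "prob_space \<mu>" and "sets \<mu> = sets borel" and "AE x in \<mu>. 0 \<le> x"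
  shows "is_fixed_point \<mu> \<longleftrightarrow>
           (\<mu> = return borel 0 \<or>
            (\<exists>a>0. \<forall>x\<ge>0. measure \<mu> {..x} = x / (a + x)))"
proof -
  interpret nonneg_real_distribution \<mu>
    using assms by (simp add: nonneg_real_distribution_def nonneg_real_distribution_axioms_def
        real_distribution_def real_distribution_axioms_def)
  show ?thesis
  proof
    assume "is_fixed_point \<mu>"
    then show "\<mu> = return borel 0 \<or> (\<exists>a>0. \<forall>x\<ge>0. measure \<mu> {..x} = x / (a + x))"
      using cdf_cases_of_fixed_point by (simp add: cdf_def)
  next
    assume "\<mu> = return borel 0 \<or> (\<exists>a>0. \<forall>x\<ge>0. measure \<mu> {..x} = x / (a + x))"
    then show "is_fixed_point \<mu>"
    proof
      assume "\<mu> = return borel 0"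
      then show ?thesis by (intro is_fixed_point_of_cdf_one) (simp add: cdf_def measure_return)
    next
      assume "\<exists>a>0. \<forall>x\<ge>0. measure \<mu> {..x} = x / (a + x)"
      then show ?thesis by (auto simp: cdf_def intro: is_fixed_point_of_cdf_hyperbolic)
    qed
  qed
qed

end
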